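(* Let $G=(V,E)$ be a $d$-regular graph with $d\ge 1$ that is a UNN, and let $s:E\to\{-1,+1\}$ be any signing. Then the 2-lift $\hat G$ of $G$ with respect to $s$ is a UNN.
   Context: All graphs are finite, simple and undirected. For a vertex $v$, $\mathrm{nb}(v)$ denotes its set of neighbors (a vertex is not its own neighbor). A graph is a unique-neighborhood network (UNN) if distinct vertices have distinct neighborhoods. The 2-lift of $G=(V,E)$ with respect to a signing $s:E\to\{-1,+1\}$ is the graph $\hat G$ with vertex set $\{x_1,x_2 : x\in V\}$ (two copies of each vertex) and, for each edge $\{x,y\}\in E$: the edges $\{x_1,y_1\},\{x_2,y_2\}$ if $s(\{x,y\})=+1$, and the edges $\{x_1,y_2\},\{x_2,y_1\}$ if $s(\{x,y\})=-1$; $\hat G$ has no other edges. *)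

theory Defs
  imports Main
begin

definition simple_graph :: "'a set \<Rightarrow> 'a set set \<Rightarrow> bool" where
  "simple_graph V E \<longleftrightarrow> finite V \<and> (\<forall>e\<in>E. e \<subseteq> V \<and> card e = 2)"

definition nb :: "'a set set \<Rightarrow> 'a \<Rightarrow> 'a set" where
  "nb E x = {y. {x, y} \<in> E}"

definition regular :: "'a set \<Rightarrow> 'a set set \<Rightarrow> nat \<Rightarrow> bool" where
  "regular V E d \<longleftrightarrow> (\<forall>x\<in>V. card (nb E x) = d)"

definition UNN :: "'a set \<Rightarrow> 'a set set \<Rightarrow> bool" where
  "UNN V E \<longleftrightarrow> (\<forall>x\<in>V. \<forall>y\<in>V. x \<noteq> y \<longrightarrow> nb E x \<noteq> nb E y)"

definition signing :: "'a set set \<Rightarrow> ('a set \<Rightarrow> int) \<Rightarrow> bool" where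
  "signing E s \<longleftrightarrow> (\<forall>e\<in>E. s e = 1 \<or> s e = -1)"

text \<open>2-lift: copy x_1 is (x,1), copy x_2 is (x,2).\<close>
definition lift_vertices :: "'a set \<Rightarrow> ('a \<times> nat) set" where
  "lift_vertices V = V \<times> {1, 2}"

definition lift_edges :: "'a set set \<Rightarrow> ('a set \<Rightarrow> int) \<Rightarrow> ('a \<times> nat) set set" where
  "lift_edges E s =
     {{(x,1),(y,1)} | x y. {x,y} \<in> E \<and> s {x,y} = 1} \<union>
     {{(x,2),(y,2)} | x y. {x,y} \<in> E \<and> s {x,y} = 1} \<union>
     {{(x,1),(y,2)} | x y. {x,y} \<in> E \<and> s {x,y} = -1} \<union>
     {{(x,2),(y,1)} | x y. {x,y} \<in> E \<and> s {x,y} = -1}"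

end

theory Submission
  imports Defs
begin

(* Each vertex x_i of the lift has exactly one neighbour over every neighbour y of x,
  namely the copy of y selected by the sign of the edge {x, y}. Projecting neighbourhoods to
  the base graph therefore gives back nb x, so two vertices of the lift with equal neighbourhoods
  lie over the same vertex x. If they were the two copies of x, then over any neighbour y of x
  (one exists by d >= 1) they would share a neighbour, i.e. the sign of {x, y} would send both
  copies of x to the same copy of y, which is impossible. *)

definition lift_copy :: "('a set \<Rightarrow> int) \<Rightarrow> 'a set \<Rightarrow> nat \<Rightarrow> nat" where
  "lift_copy s e i = (if s e = 1 then i else 3 - i)"

lemma lift_copy_inj:
  assumes "i \<in> {1, 2}" and "j \<in> {1, 2}" and "lift_copy s e i = lift_copy s e j"
  shows "i = j"
  using assms by (auto simp: lift_copy_def split: if_splits)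

lemma lift_edge_iff:
  assumes "signing E s" and "i \<in> {1, 2}"
  shows "{(x, i), (y, k)} \<in> lift_edges E s \<longleftrightarrow> {x, y} \<in> E \<and> k = lift_copy s {x, y} i"
  using assms unfolding lift_edges_def signing_def lift_copy_def
  by (auto simp: doubleton_eq_iff insert_commute)

lemma nb_lift_edges:
  assumes "signing E s" and "i \<in> {1, 2}"
  shows "nb (lift_edges E s) (x, i) = (\<lambda>y. (y, lift_copy s {x, y} i)) ` nb E x"
  using lift_edge_iff[OF assms] by (auto simp: nb_def)

lemma fst_nb_lift_edges:
  assumes "signing E s" and "i \<in> {1, 2}"
  shows "fst ` nb (lift_edges E s) (x, i) = nb E x"
  unfolding nb_lift_edges[OF assms] by (simp add: image_image)

theorem UNN_lift_edges:
  assumes signing: "signing E s" and unn: "UNN V E" and nb_nonempty: "\<forall>x\<in>V. nb E x \<noteq> {}"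
  shows "UNN (lift_vertices V) (lift_edges E s)"
  unfolding UNN_def
proof (intro ballI impI notI)
  fix p q
  assume "p \<in> lift_vertices V" "q \<in> lift_vertices V" and "p \<noteq> q"
    and same_nb: "nb (lift_edges E s) p = nb (lift_edges E s) q"
  then obtain x i y j where p: "p = (x, i)" and q: "q = (y, j)" and "x \<in> V" "y \<in> V"
    and ij: "i \<in> {1, 2}" "j \<in> {1, 2}"
    by (auto simp: lift_vertices_def)
  have "nb E x = nb E y"
    using same_nb fst_nb_lift_edges[OF signing ij(1), of x] fst_nb_lift_edges[OF signing ij(2), of y]
    by (simp add: p q)
  with unn \<open>x \<in> V\<close> \<open>y \<in> V\<close> have "x = y"
    unfolding UNN_def by blast
  with \<open>p \<noteq> q\<close> p q have "i \<noteq> j" by simp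
  obtain z where "z \<in> nb E x"
    using nb_nonempty \<open>x \<in> V\<close> by blast
  then have "(z, lift_copy s {x, z} i) \<in> nb (lift_edges E s) q"
    using same_nb nb_lift_edges[OF signing ij(1)] p by auto
  then have "lift_copy s {x, z} i = lift_copy s {x, z} j"
    using nb_lift_edges[OF signing ij(2)] q \<open>x = y\<close> by auto
  with lift_copy_inj ij \<open>i \<noteq> j\<close> show False by blast
qed

theorem lemma5:
  fixes V :: "'a set" and E :: "'a set set" and s :: "'a set \<Rightarrow> int" and d :: nat
  assumes "simple_graph V E"
    and "regular V E d" and "d \<ge> 1"
    and "UNN V E"
    and "signing E s"
  shows "UNN (lift_vertices V) (lift_edges E s)"
proof (rule UNN_lift_edges)
  show "\<forall>x\<in>V. nb E x \<noteq> {}"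
    using assms(2,3) by (auto simp: regular_def)
qed (use assms in auto)

end
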